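(* Let $h\in\mathcal H$ and $\varphi(\underline{x})=h(x_0,x_1)$ on $X=[0,1]^{\mathbb N_0}$. Let $a,b\in\mathrm{m}_h$ be such that $a$ and $b$ do not belong to the same connected component of $\mathrm{m}_h$. Then $H_\varphi(a^\infty,b^\infty)+H_\varphi(b^\infty,a^\infty)\neq0$, i.e. $a^\infty\not\sim_\varphi b^\infty$.
   Context: $X=[0,1]^{\mathbb N_0}$ with metric $d_X(\underline{x},\underline{y})=\sum_{i\ge0}|x_i-y_i|/2^{i+1}$ and shift $\sigma(\underline{x})_i=x_{i+1}$. $\alpha_\varphi=\inf_\mu\int\varphi\,d\mu$ over $\sigma$-invariant Borel probability measures. $B(\underline{x},\underline{y},n;\varepsilon)=\{\underline{z}: d_X(\underline{x},\underline{z})<\varepsilon,\ d_X(\sigma^n\underline{z},\underline{y})<\varepsilon\}$; Peierls barrier $H_\varphi(\underline{x},\underline{y})=\lim_{\varepsilon\to0}\liminf_{n\to\infty}\inf\{\sum_{i=0}^{n-1}(\varphi(\sigma^i\underline{z})-\alpha_\varphi): \underline{z}\in B(\underline{x},\underline{y},n;\varepsilon)\}\in\mathbb R\cup\{+\infty\}$. For points of the Aubry set, $\underline{x}\sim_\varphi\underline{y}$ means $H_\varphi(\underline{x},\underline{y})+H_\varphi(\underline{y},\underline{x})=0$. $h^*=\min_x h(x,x)$, $\mathrm{m}_h=\{a: h(a,a)=h^*\}$, $a^\infty=aaa\ldots$. A finite sequence $(x_k,\dots,x_l)$ is minimal (for $h$) if $\sum_{i=k}^{l-1}h(x_i,x_{i+1})\le\sum_{i=k}^{l-1}h(y_i,y_{i+1})$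 for every $(y_k,\dots,y_l)$ in $[0,1]$ with the same endpoints. $\mathcal H$ is the set of Lipschitz $h:[0,1]^2\to\mathbb R$ such that (H3) if $\xi_1<\xi_2$, $\eta_1<\eta_2$ then $h(\xi_1,\eta_1)+h(\xi_2,\eta_2)<h(\xi_1,\eta_2)+h(\xi_2,\eta_1)$; and (H4) if $(x_{-1},x_0,x_1)\ne(x'_{-1},x_0,x'_1)$ are both minimal then $(x_{-1}-x'_{-1})(x_1-x'_1)<0$. *)

theory Defs
  imports "HOL-Probability.Probability"
begin

definition Xsp :: "(nat \<Rightarrow> real) set" where
  "Xsp = {x. \<forall>i. x i \<in> {0..1}}"

definition dX :: "(nat \<Rightarrow> real) \<Rightarrow> (nat \<Rightarrow> real) \<Rightarrow> real" where
  "dX x y = (\<Sum>i. \<bar>x i - y i\<bar> / 2 ^ (Suc i))"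

definition shift :: "(nat \<Rightarrow> real) \<Rightarrow> (nat \<Rightarrow> real)" where
  "shift x = (\<lambda>i. x (Suc i))"

text \<open>Borel probability measures on X (Borel sets of the product topology restricted to X,
  which is the topology induced by dX on X) that are shift-invariant.\<close>
definition inv_measures :: "(nat \<Rightarrow> real) measure set" where
  "inv_measures = {\<mu>. prob_space \<mu> \<and> sets \<mu> = sets (restrict_space borel Xsp) \<and>
      shift \<in> measurable \<mu> \<mu> \<and>
      (\<forall>A\<in>sets \<mu>. emeasure \<mu> (shift -` A \<inter> space \<mu>) = emeasure \<mu> A)}"

definition alpha :: "((nat \<Rightarrow> real) \<Rightarrow> real) \<Rightarrow> real" where
  "alpha \<phi> = (INF \<mu>\<in>inv_measures. integral\<^sup>L \<mu> \<phi>)"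

definition Bset :: "(nat \<Rightarrow> real) \<Rightarrow> (nat \<Rightarrow> real) \<Rightarrow> nat \<Rightarrow> real \<Rightarrow> (nat \<Rightarrow> real) set" where
  "Bset x y n \<epsilon> = {z \<in> Xsp. dX x z < \<epsilon> \<and> dX ((shift ^^ n) z) y < \<epsilon>}"

text \<open>Peierls barrier, with values in the extended reals (inf of the empty set is +infinity).\<close>
definition peierls :: "((nat \<Rightarrow> real) \<Rightarrow> real) \<Rightarrow> (nat \<Rightarrow> real) \<Rightarrow> (nat \<Rightarrow> real) \<Rightarrow> ereal" where
  "peierls \<phi> x y = Lim (at_right (0::real)) (\<lambda>\<epsilon>.
      liminf (\<lambda>n. INF z\<in>Bset x y n \<epsilon>.
         ereal (\<Sum>i<n. \<phi> ((shift ^^ i) z) - alpha \<phi>)))"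

definition hstar :: "(real \<Rightarrow> real \<Rightarrow> real) \<Rightarrow> real" where
  "hstar h = Inf ((\<lambda>x. h x x) ` {0..1})"

definition mset_h :: "(real \<Rightarrow> real \<Rightarrow> real) \<Rightarrow> real set" where
  "mset_h h = {a \<in> {0..1}. h a a = hstar h}"

definition minimal_seq :: "(real \<Rightarrow> real \<Rightarrow> real) \<Rightarrow> real list \<Rightarrow> bool" where
  "minimal_seq h xs \<longleftrightarrow> xs \<noteq> [] \<and> set xs \<subseteq> {0..1} \<and>
     (\<forall>ys. length ys = length xs \<and> set ys \<subseteq> {0..1} \<and> hd ys = hd xs \<and> last ys = last xs \<longrightarrow>
        (\<Sum>i<length xs - 1. h (xs ! i) (xs ! Suc i)) \<le> (\<Sum>i<length ys - 1. h (ys ! i) (ys ! Suc i)))"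

definition classH :: "(real \<Rightarrow> real \<Rightarrow> real) set" where
  "classH = {h.
     (\<exists>L. L-lipschitz_on ({0..1} \<times> {0..1}) (\<lambda>(x, y). h x y)) \<and>
     (\<forall>\<xi>1\<in>{0..1}. \<forall>\<xi>2\<in>{0..1}. \<forall>\<eta>1\<in>{0..1}. \<forall>\<eta>2\<in>{0..1}.
        \<xi>1 < \<xi>2 \<and> \<eta>1 < \<eta>2 \<longrightarrow> h \<xi>1 \<eta>1 + h \<xi>2 \<eta>2 < h \<xi>1 \<eta>2 + h \<xi>2 \<eta>1) \<and>
     (\<forall>u w u' w' v. (u, w) \<noteq> (u', w') \<and> minimal_seq h [u, v, w] \<and> minimal_seq h [u', v, w']
        \<longrightarrow> (u - u') * (w - w') < 0)}"

end

theory Submission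
  imports Defs
begin

text \<open>
  As a and b lie in different components of \<open>mset_h h\<close>, some c strictly between them
  has \<open>h c c > hstar h\<close>. The twist condition (H3) gives cyclic sums of h a Monge structure:
  deleting the largest point m of a cycle, i.e. replacing \<open>p \<rightarrow> m \<rightarrow> s\<close> by \<open>p \<rightarrow> s\<close>,
  lowers the sum by at least \<open>h m m \<ge> hstar h\<close>. So a cycle of N points has sum at least
  \<open>N * hstar h\<close>, and, by compactness, at least a fixed \<open>E > 0\<close> more if it has points on
  both sides of c. An orbit segment from near \<open>a\<^sup>\<infinity>\<close> to near \<open>b\<^sup>\<infinity>\<close> followed by one
  from near \<open>b\<^sup>\<infinity>\<close> back to near \<open>a\<^sup>\<infinity>\<close> closes up, with a small Lipschitz error, to
  such a cycle. Since \<open>alpha \<phi> \<le> h a a = hstar h\<close> (Dirac mass at the fixed point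
  \<open>a\<^sup>\<infinity>\<close>), the two Birkhoff sums of \<open>\<phi> - alpha \<phi>\<close> add up to at least E/2, and hence
  so do the two Peierls barriers.
\<close>

section \<open>Cyclic sums\<close>

fun path_sum :: "('a \<Rightarrow> 'a \<Rightarrow> real) \<Rightarrow> 'a list \<Rightarrow> real" where
  "path_sum h [] = 0"
| "path_sum h [x] = 0"
| "path_sum h (x # y # ys) = h x y + path_sum h (y # ys)"

definition cycle_sum :: "('a \<Rightarrow> 'a \<Rightarrow> real) \<Rightarrow> 'a list \<Rightarrow> real" where
  "cycle_sum h xs = path_sum h xs + h (last xs) (hd xs)"

lemma path_sum_append:
  "xs \<noteq> [] \<Longrightarrow> ys \<noteq> [] \<Longrightarrow> path_sum h (xs @ ys) = path_sum h xs + h (last xs) (hd ys) + path_sum h ys"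
proof (induction xs)
  case (Cons x xs)
  then show ?case by (cases xs; cases ys) auto
qed simp

lemma path_sum_upt: "path_sum h (map z [0..<Suc n]) = (\<Sum>i<n. h (z i) (z (Suc i)))"
proof (induction n)
  case (Suc n)
  have "map z [0..<Suc (Suc n)] = map z [0..<Suc n] @ [z (Suc n)]" by simp
  with Suc show ?case by (simp add: path_sum_append last_map del: upt_Suc)
qed simp

lemma cycle_sum_append_commute: "cycle_sum h (xs @ ys) = cycle_sum h (ys @ xs)"
  by (cases "xs = [] \<or> ys = []") (auto simp: cycle_sum_def path_sum_append)

lemma cycle_sum_two_segments:
  assumes "0 < n" "0 < m"
  shows "cycle_sum h (map z [0..<n] @ map w [0..<m])
    = (\<Sum>i<n. h (z i) (z (Suc i))) + (\<Sum>i<m. h (w i) (w (Suc i)))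
      + (h (z (n - 1)) (w 0) - h (z (n - 1)) (z n)) + (h (w (m - 1)) (z 0) - h (w (m - 1)) (w m))"
proof -
  obtain n' m' where n: "n = Suc n'" and m: "m = Suc m'"
    using assms by (metis gr0_implies_Suc)
  have "cycle_sum h (map z [0..<Suc n'] @ map w [0..<Suc m'])
    = path_sum h (map z [0..<Suc n']) + h (z n') (w 0) + path_sum h (map w [0..<Suc m']) + h (w m') (z 0)"
    unfolding cycle_sum_def by (simp add: path_sum_append last_map hd_map del: upt_Suc)
  then show ?thesis
    unfolding n m path_sum_upt by simp
qed

lemma cycle_sum_two_segments_le:
  fixes h :: "real \<Rightarrow> real \<Rightarrow> real"
  assumes "0 < n" "0 < m" "\<And>i. z i \<in> S" "\<And>i. w i \<in> S"
    and lip: "\<And>p q q'. p \<in> S \<Longrightarrow> q \<in> S \<Longrightarrow> q' \<in> S \<Longrightarrow> \<bar>h p q - h p q'\<bar> \<le> L * \<bar>q - q'\<bar>"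
  shows "cycle_sum h (map z [0..<n] @ map w [0..<m])
    \<le> (\<Sum>i<n. h (z i) (z (Suc i))) + (\<Sum>i<m. h (w i) (w (Suc i)))
      + L * \<bar>w 0 - z n\<bar> + L * \<bar>z 0 - w m\<bar>"
proof -
  have "h (z (n - 1)) (w 0) - h (z (n - 1)) (z n) \<le> L * \<bar>w 0 - z n\<bar>"
    using lip[of "z (n - 1)" "w 0" "z n"] assms(3,4) by simp
  moreover have "h (w (m - 1)) (z 0) - h (w (m - 1)) (w m) \<le> L * \<bar>z 0 - w m\<bar>"
    using lip[of "w (m - 1)" "z 0" "w m"] assms(3,4) by simp
  ultimately show ?thesis
    unfolding cycle_sum_two_segments[OF assms(1,2)] by linarith
qed

lemma cycle_sum_remove_max:
  fixes xs :: "'a::linorder list"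
  assumes "Suc 0 < length xs"
  obtains zs p s where "length xs = Suc (length zs)" "set xs = insert (Max (set xs)) (set zs)"
    "p \<in> set zs" "s \<in> set zs"
    "cycle_sum h xs = cycle_sum h zs + (h p (Max (set xs)) + h (Max (set xs)) s - h p s)"
proof -
  define m where "m = Max (set xs)"
  have "m \<in> set xs" unfolding m_def using assms by (intro Max_in) auto
  then obtain us vs where xs: "xs = us @ m # vs" by (meson split_list)
  define zs where "zs = vs @ us"
  have "zs \<noteq> []" using assms xs zs_def by auto
  have "cycle_sum h xs = cycle_sum h (zs @ [m])"
    using cycle_sum_append_commute[of h us "m # vs"] cycle_sum_append_commute[of h "[m]" zs]
    by (simp add: xs zs_def)
  also have "\<dots> = cycle_sum h zs + (h (last zs) m + h m (hd zs) - h (last zs) (hd zs))"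
    using \<open>zs \<noteq> []\<close> by (simp add: cycle_sum_def path_sum_append)
  finally have "cycle_sum h xs = cycle_sum h zs + (h (last zs) m + h m (hd zs) - h (last zs) (hd zs))" .
  moreover have "length xs = Suc (length zs)" "set xs = insert m (set zs)"
    by (auto simp: xs zs_def)
  moreover have "last zs \<in> set zs" "hd zs \<in> set zs"
    using \<open>zs \<noteq> []\<close> by auto
  ultimately show ?thesis
    using that unfolding m_def by blast
qed

lemma cycle_sum_ge:
  fixes h :: "'a::linorder \<Rightarrow> 'a \<Rightarrow> real" and d :: real
  assumes monge: "\<And>p s m. p \<in> S \<Longrightarrow> s \<in> S \<Longrightarrow> m \<in> S \<Longrightarrow> p \<le> m \<Longrightarrow> s \<le> m \<Longrightarrow>
      h p s + h m m \<le> h p m + h m s"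
    and diag: "\<And>x. x \<in> S \<Longrightarrow> d \<le> h x x"
    and "xs \<noteq> []" "set xs \<subseteq> S"
  shows "length xs * d \<le> cycle_sum h xs"
  using assms(3,4)
proof (induction "length xs" arbitrary: xs rule: less_induct)
  case less
  show ?case
  proof (cases "length xs = Suc 0")
    case True
    then obtain x where "xs = [x]" by (auto simp: length_Suc_conv)
    with diag less.prems show ?thesis by (simp add: cycle_sum_def)
  next
    case False
    let ?m = "Max (set xs)"
    have "Suc 0 < length xs" using False less.prems by (simp add: Suc_lessI)
    then obtain zs p s where zs: "length xs = Suc (length zs)" "set xs = insert ?m (set zs)"
      "p \<in> set zs" "s \<in> set zs" "cycle_sum h xs = cycle_sum h zs + (h p ?m + h ?m s - h p s)"
      by (rule cycle_sum_remove_max)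
    have "set zs \<subseteq> S" "?m \<in> S" "p \<in> set xs" "s \<in> set xs"
      using less.prems zs(2-4) by auto
    then have "p \<le> ?m" "s \<le> ?m"
      by simp_all
    have "zs \<noteq> []"
      using zs(3) by auto
    then have "length zs * d \<le> cycle_sum h zs"
      using less.hyps[of zs] zs(1) \<open>set zs \<subseteq> S\<close> by simp
    moreover have "h p s + h ?m ?m \<le> h p ?m + h ?m s" "d \<le> h ?m ?m"
      using \<open>set zs \<subseteq> S\<close> \<open>?m \<in> S\<close> \<open>p \<le> ?m\<close> \<open>s \<le> ?m\<close> zs(3,4) by (auto intro: monge diag)
    ultimately show ?thesis
      using zs(1,5) by (simp add: algebra_simps)
  qed
qed

lemma cycle_sum_ge_crossing:
  fixes h :: "'a::linorder \<Rightarrow> 'a \<Rightarrow> real" and d E :: real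
  assumes monge: "\<And>p s m. p \<in> S \<Longrightarrow> s \<in> S \<Longrightarrow> m \<in> S \<Longrightarrow> p \<le> m \<Longrightarrow> s \<le> m \<Longrightarrow>
      h p s + h m m \<le> h p m + h m s"
    and diag: "\<And>x. x \<in> S \<Longrightarrow> d \<le> h x x"
    and gap: "\<And>p s m. p \<in> S \<Longrightarrow> s \<in> S \<Longrightarrow> m \<in> S \<Longrightarrow> p < c \<Longrightarrow> s < c \<Longrightarrow> c \<le> m \<Longrightarrow>
      d + E \<le> h p m + h m s - h p s"
    and "set xs \<subseteq> S" "x \<in> set xs" "x < c" "y \<in> set xs" "c \<le> y"
  shows "length xs * d + E \<le> cycle_sum h xs"
  using assms(4-)
proof (induction "length xs" arbitrary: xs y rule: less_induct)
  case less
  let ?m = "Max (set xs)"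
  have "c \<le> ?m" using less.prems by (meson List.finite_set Max_ge order_trans)
  then have "x \<noteq> ?m" using less.prems by auto
  have "card {x, ?m} \<le> card (set xs)"
    using less.prems by (intro card_mono) (auto intro: Max_in)
  then have "Suc 0 < length xs"
    using \<open>x \<noteq> ?m\<close> card_length[of xs] by simp
  then obtain zs p s where zs: "length xs = Suc (length zs)" "set xs = insert ?m (set zs)"
    "p \<in> set zs" "s \<in> set zs" "cycle_sum h xs = cycle_sum h zs + (h p ?m + h ?m s - h p s)"
    by (rule cycle_sum_remove_max)
  have "set zs \<subseteq> S" "?m \<in> S" "x \<in> set zs" "p \<in> set xs" "s \<in> set xs"
    using less.prems zs(2-4) \<open>x \<noteq> ?m\<close> by auto
  then have "p \<le> ?m" "s \<le> ?m"
    by simp_all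
  show ?case
  proof (cases "\<exists>y'\<in>set zs. c \<le> y'")
    case True
    then obtain y' where "y' \<in> set zs" "c \<le> y'" by blast
    then have "length zs * d + E \<le> cycle_sum h zs"
      using less.hyps[of zs y'] less.prems zs \<open>set zs \<subseteq> S\<close> \<open>x \<in> set zs\<close> by auto
    moreover have "h p s + h ?m ?m \<le> h p ?m + h ?m s" "d \<le> h ?m ?m"
      using \<open>set zs \<subseteq> S\<close> \<open>?m \<in> S\<close> \<open>p \<le> ?m\<close> \<open>s \<le> ?m\<close> zs(3,4) by (auto intro: monge diag)
    ultimately show ?thesis
      using zs(1,5) by (simp add: algebra_simps)
  next
    case False
    have "length zs * d \<le> cycle_sum h zs"
      using \<open>set zs \<subseteq> S\<close> \<open>x \<in> set zs\<close> by (intro cycle_sum_ge[OF monge diag]) auto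
    moreover have "d + E \<le> h p ?m + h ?m s - h p s"
      using \<open>set zs \<subseteq> S\<close> \<open>?m \<in> S\<close> \<open>c \<le> ?m\<close> zs(3,4) False by (intro gap) (auto simp: not_le)
    ultimately show ?thesis
      using zs(1,5) by (simp add: algebra_simps)
  qed
qed

section \<open>The class H\<close>

lemma classH_monge_strict:
  assumes "h \<in> classH" "p \<in> {0..1}" "s \<in> {0..1}" "m \<in> {0..1}" "p < m" "s < m"
  shows "h p s + h m m < h p m + h m s"
  using assms unfolding classH_def by auto

lemma classH_monge:
  assumes "h \<in> classH" "p \<in> {0..1}" "s \<in> {0..1}" "m \<in> {0..1}" "p \<le> m" "s \<le> m"
  shows "h p s + h m m \<le> h p m + h m s"
  using classH_monge_strict[OF assms(1-4)] assms(5,6) by (cases "p = m \<or> s = m") auto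

lemma classH_lipschitz_snd:
  assumes "h \<in> classH"
  obtains L where "0 \<le> L"
    "\<And>p q q'. p \<in> {0..1} \<Longrightarrow> q \<in> {0..1} \<Longrightarrow> q' \<in> {0..1} \<Longrightarrow> \<bar>h p q - h p q'\<bar> \<le> L * \<bar>q - q'\<bar>"
proof -
  obtain L where L: "L-lipschitz_on ({0..1} \<times> {0..1}) (\<lambda>(x, y). h x y)"
    using assms unfolding classH_def by blast
  have "\<bar>h p q - h p q'\<bar> \<le> L * \<bar>q - q'\<bar>" if "p \<in> {0..1}" "q \<in> {0..1}" "q' \<in> {0..1}" for p q q'
    using lipschitz_onD[OF L, of "(p, q)" "(p, q')"] that by (simp add: dist_Pair_Pair dist_real_def)
  with lipschitz_on_nonneg[OF L] show ?thesis by (rule that)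
qed

lemma classH_continuous_on_compose:
  assumes "h \<in> classH" "continuous_on K f" "continuous_on K g" "f ` K \<subseteq> {0..1}" "g ` K \<subseteq> {0..1}"
  shows "continuous_on K (\<lambda>t. h (f t) (g t))"
proof -
  obtain L where "L-lipschitz_on ({0..1} \<times> {0..1}) (\<lambda>(x, y). h x y)"
    using assms(1) unfolding classH_def by blast
  then have "continuous_on ({0..1} \<times> {0..1}) (\<lambda>(x, y). h x y)"
    by (rule lipschitz_on_continuous_on)
  from continuous_on_compose2[OF this continuous_on_Pair[OF assms(2,3)]] assms(4,5)
  show ?thesis by auto
qed

lemma hstar_le:
  assumes "h \<in> classH" "x \<in> {0..1}"
  shows "hstar h \<le> h x x"
proof -
  have "continuous_on {0..1} (\<lambda>x. h x x)"
    using classH_continuous_on_compose[OF assms(1) continuous_on_id continuous_on_id] by simp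
  then have "bdd_below ((\<lambda>x. h x x) ` {0..1})"
    by (intro bounded_imp_bdd_below compact_imp_bounded compact_continuous_image compact_Icc)
  with assms(2) show ?thesis
    unfolding hstar_def by (auto intro: cInf_lower)
qed

lemma classH_crossing_gap:
  assumes hH: "h \<in> classH" and c: "c \<in> {0..1}" "c \<notin> mset_h h"
  obtains E where "0 < E"
    "\<And>p s m. p \<in> {0..c} \<Longrightarrow> s \<in> {0..c} \<Longrightarrow> m \<in> {c..1} \<Longrightarrow> hstar h + E \<le> h p m + h m s - h p s"
proof -
  define K where "K = {0..c} \<times> {0..c} \<times> {c..1::real}"
  define F where "F t = h (fst t) (snd (snd t)) + h (snd (snd t)) (fst (snd t))
    - h (fst t) (fst (snd t)) - hstar h" for t
  have proj: "fst ` K \<subseteq> {0..1}" "(\<lambda>t. fst (snd t)) ` K \<subseteq> {0..1}" "(\<lambda>t. snd (snd t)) ` K \<subseteq> {0..1}"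
    using c by (auto simp: K_def)
  have "continuous_on K F"
    unfolding F_def using proj
    by (intro continuous_on_diff continuous_on_add continuous_on_const
        classH_continuous_on_compose[OF hH] continuous_on_fst continuous_on_snd continuous_on_id)
  moreover have "compact K"
    unfolding K_def by (intro compact_Times compact_Icc)
  moreover have "K \<noteq> {}"
    using c by (simp add: K_def)
  ultimately obtain t0 where t0: "t0 \<in> K" "\<And>t. t \<in> K \<Longrightarrow> F t0 \<le> F t"
    using continuous_attains_inf by metis
  obtain p0 s0 m0 where t0_eq: "t0 = (p0, s0, m0)" by (metis prod.collapse)
  have in01: "p0 \<in> {0..1}" "s0 \<in> {0..1}" "m0 \<in> {0..1}" "p0 \<le> m0" "s0 \<le> m0"
    using t0(1) c unfolding K_def t0_eq by auto
  have "hstar h < h c c"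
    using hstar_le[OF hH c(1)] c unfolding mset_h_def by auto
  have "0 < F t0"
  proof (cases "m0 = c")
    case True
    with classH_monge[OF hH in01] \<open>hstar h < h c c\<close> show ?thesis
      by (simp add: F_def t0_eq)
  next
    case False
    then have "p0 < m0" "s0 < m0" using t0(1) unfolding K_def t0_eq by auto
    with classH_monge_strict[OF hH in01(1-3)] hstar_le[OF hH in01(3)] show ?thesis
      by (simp add: F_def t0_eq)
  qed
  moreover have "hstar h + F t0 \<le> h p m + h m s - h p s"
    if "p \<in> {0..c}" "s \<in> {0..c}" "m \<in> {c..1}" for p s m
    using t0(2)[of "(p, s, m)"] that unfolding K_def F_def by simp
  ultimately show ?thesis by (rule that)
qed

lemma classH_cycle_sum_gap:
  assumes hH: "h \<in> classH" and c: "c \<in> {0..1}" "c \<notin> mset_h h"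
  obtains E where "0 < E"
    "\<And>xs x y. set xs \<subseteq> {0..1} \<Longrightarrow> x \<in> set xs \<Longrightarrow> x < c \<Longrightarrow> y \<in> set xs \<Longrightarrow> c \<le> y \<Longrightarrow>
      length xs * hstar h + E \<le> cycle_sum h xs"
proof -
  obtain E where "0 < E" and gap:
    "\<And>p s m. p \<in> {0..c} \<Longrightarrow> s \<in> {0..c} \<Longrightarrow> m \<in> {c..1} \<Longrightarrow> hstar h + E \<le> h p m + h m s - h p s"
    using classH_crossing_gap[OF assms] by blast
  have gap01: "hstar h + E \<le> h p m + h m s - h p s"
    if "p \<in> {0..1}" "s \<in> {0..1}" "m \<in> {0..1}" "p < c" "s < c" "c \<le> m" for p s m
    using that by (intro gap) auto
  have "length xs * hstar h + E \<le> cycle_sum h xs"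
    if "set xs \<subseteq> {0..1}" "x \<in> set xs" "x < c" "y \<in> set xs" "c \<le> y" for xs x y
    using cycle_sum_ge_crossing[OF classH_monge[OF hH] hstar_le[OF hH] gap01 that] .
  with \<open>0 < E\<close> show ?thesis by (rule that)
qed

section \<open>Minimal ergodic averages and the Peierls barrier\<close>

lemma funpow_shift: "(shift ^^ n) z = (\<lambda>i. z (i + n))"
  by (induction n arbitrary: z) (auto simp: shift_def funpow_Suc_right)

lemma shift_measurable: "shift \<in> restrict_space borel Xsp \<rightarrow>\<^sub>M restrict_space borel Xsp"
proof (rule measurable_restrict_space3)
  show "shift \<in> borel_measurable borel"
    unfolding shift_def by (intro borel_measurable_continuous_onI continuous_intros) simp
  show "shift \<in> Xsp \<rightarrow> Xsp"
    unfolding Xsp_def shift_def by auto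
qed

lemma return_in_inv_measures:
  assumes "x \<in> Xsp" "shift x = x"
  shows "return (restrict_space borel Xsp) x \<in> inv_measures"
proof -
  let ?M = "restrict_space borel Xsp"
  have space: "space ?M = Xsp" by (simp add: space_restrict_space)
  have "emeasure (return ?M x) (shift -` A \<inter> space (return ?M x)) = emeasure (return ?M x) A"
    if "A \<in> sets ?M" for A
    using that assms space measurable_sets[OF shift_measurable that] by (simp add: indicator_def)
  with assms shift_measurable space show ?thesis
    unfolding inv_measures_def by (auto intro: prob_space_return)
qed

lemma alpha_le_fixed_point:
  assumes "continuous_on Xsp \<phi>" "bounded (\<phi> ` Xsp)" "x \<in> Xsp" "shift x = x"
  shows "alpha \<phi> \<le> \<phi> x"
proof -
  let ?M = "restrict_space borel Xsp"
  have \<phi>_measurable: "\<phi> \<in> borel_measurable ?M"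
    by (rule borel_measurable_continuous_on_restrict[OF assms(1)])
  obtain B where B: "\<And>y. y \<in> Xsp \<Longrightarrow> norm (\<phi> y) \<le> B"
    using assms(2) by (auto simp: bounded_iff)
  have "- B \<le> integral\<^sup>L \<mu> \<phi>" if "\<mu> \<in> inv_measures" for \<mu>
  proof -
    interpret prob_space \<mu> using that by (simp add: inv_measures_def)
    have sets: "sets \<mu> = sets ?M" using that by (simp add: inv_measures_def)
    then have "space \<mu> = Xsp" using sets_eq_imp_space_eq[OF sets] by (simp add: space_restrict_space)
    then have bound: "AE y in \<mu>. norm (\<phi> y) \<le> B" using B by (intro AE_I2) auto
    have "integrable \<mu> \<phi>"
      using integrable_const_bound[OF bound] \<phi>_measurable measurable_cong_sets[OF sets refl] by blast
    with bound show ?thesis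
      by (intro integral_ge_const) (auto elim: AE_mp)
  qed
  then have "bdd_below ((\<lambda>\<mu>. integral\<^sup>L \<mu> \<phi>) ` inv_measures)"
    by (intro bdd_belowI[where m = "- B"]) auto
  moreover have "integral\<^sup>L (return ?M x) \<phi> = \<phi> x"
    using assms(3) \<phi>_measurable by (simp add: space_restrict_space integral_return)
  ultimately show ?thesis
    unfolding alpha_def using cINF_lower[OF _ return_in_inv_measures[OF assms(3,4)]] by metis
qed

lemma alpha_le_hstar:
  assumes hH: "h \<in> classH" and a: "a \<in> mset_h h"
  shows "alpha (\<lambda>x. h (x 0) (x 1)) \<le> hstar h"
proof -
  have coord: "continuous_on Xsp (\<lambda>x. x i)" "(\<lambda>x. x i) ` Xsp \<subseteq> {0..1}" for i :: nat
    by (rule continuous_on_subset[OF continuous_on_product_coordinates], simp) (auto simp: Xsp_def)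
  have "continuous_on ({0..1} \<times> {0..1}) (\<lambda>p. h (fst p) (snd p))"
    by (rule classH_continuous_on_compose[OF hH continuous_on_fst[OF continuous_on_id]
        continuous_on_snd[OF continuous_on_id]]) auto
  then have "bounded ((\<lambda>p. h (fst p) (snd p)) ` ({0..1} \<times> {0..1}))"
    by (intro compact_imp_bounded compact_continuous_image compact_Times compact_Icc)
  moreover have "(\<lambda>x. h (x 0) (x 1)) ` Xsp \<subseteq> (\<lambda>p. h (fst p) (snd p)) ` ({0..1} \<times> {0..1})"
    unfolding Xsp_def by (auto simp: image_iff) (metis atLeastAtMost_iff)
  ultimately have "bounded ((\<lambda>x. h (x 0) (x 1)) ` Xsp)"
    by (rule bounded_subset)
  moreover have "(\<lambda>_. a) \<in> Xsp"
    using a unfolding mset_h_def Xsp_def by auto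
  ultimately show ?thesis
    using alpha_le_fixed_point[of "\<lambda>x. h (x 0) (x 1)" "\<lambda>_. a"] a
      classH_continuous_on_compose[OF hH coord(1) coord(1) coord(2) coord(2)]
    by (simp add: shift_def mset_h_def)
qed

lemma abs_diff_0_le_dX:
  assumes "x \<in> Xsp" "y \<in> Xsp"
  shows "\<bar>x 0 - y 0\<bar> \<le> 2 * dX x y"
proof -
  define f where "f i = \<bar>x i - y i\<bar> / 2 ^ Suc i" for i
  have "norm (f i) \<le> (1/2) ^ i" for i
  proof -
    have "\<bar>x i - y i\<bar> \<le> 1"
      using assms unfolding Xsp_def by (simp add: abs_le_iff) (smt (verit) atLeastAtMost_iff)
    then have "norm (f i) \<le> 1 / 2 ^ Suc i"
      unfolding f_def by (simp add: divide_right_mono)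
    also have "\<dots> \<le> 1 / 2 ^ i"
      by (rule divide_left_mono) auto
    also have "\<dots> = (1/2) ^ i"
      by (simp add: power_divide)
    finally show ?thesis .
  qed
  then have "summable f"
    by (intro summable_comparison_test[of f "\<lambda>i. (1/2) ^ i"]) (auto intro: summable_geometric)
  then have "f 0 \<le> suminf f"
    using sum_le_suminf[of f "{0}"] by (simp add: f_def)
  then show ?thesis
    unfolding dX_def f_def by simp
qed

lemma Bset_const_endpoints:
  assumes "z \<in> Bset (\<lambda>_. a) (\<lambda>_. b) n e" "a \<in> {0..1}" "b \<in> {0..1}"
  shows "z \<in> Xsp" "\<bar>z 0 - a\<bar> < 2 * e" "\<bar>z n - b\<bar> < 2 * e"
proof -
  have const: "(\<lambda>_. a) \<in> Xsp" "(\<lambda>_. b) \<in> Xsp"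
    using assms(2,3) unfolding Xsp_def by auto
  show z: "z \<in> Xsp"
    using assms(1) unfolding Bset_def by auto
  then have "(shift ^^ n) z \<in> Xsp"
    unfolding Xsp_def funpow_shift by auto
  with abs_diff_0_le_dX[OF const(1) z] abs_diff_0_le_dX[OF this const(2)] assms(1)
  show "\<bar>z 0 - a\<bar> < 2 * e" "\<bar>z n - b\<bar> < 2 * e"
    unfolding Bset_def funpow_shift by auto
qed

lemma Bset_mono: "e \<le> e' \<Longrightarrow> Bset x y n e \<subseteq> Bset x y n e'"
  unfolding Bset_def by auto

lemma peierls_ge_liminf:
  assumes "0 < e"
  shows "liminf (\<lambda>n. INF z\<in>Bset x y n e. ereal (\<Sum>i<n. \<phi> ((shift ^^ i) z) - alpha \<phi>))
    \<le> peierls \<phi> x y"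
proof -
  define G where "G e = liminf (\<lambda>n. INF z\<in>Bset x y n e. ereal (\<Sum>i<n. \<phi> ((shift ^^ i) z) - alpha \<phi>))"
    for e
  have G_antimono: "G e' \<le> G e" if "e \<le> e'" for e e'
    unfolding G_def using Bset_mono[OF that]
    by (intro Liminf_mono always_eventually allI INF_superset_mono) auto
  define S where "S = (SUP e\<in>{0<..}. G e)"
  have "(G \<longlongrightarrow> S) (at_right 0)"
  proof (rule increasing_tendsto)
    show "\<forall>\<^sub>F e in at_right 0. G e \<le> S"
      using eventually_at_right_less by eventually_elim (simp add: S_def SUP_upper)
    fix t assume "t < S"
    then obtain e0 where "0 < e0" "t < G e0"
      unfolding S_def less_SUP_iff by auto
    then show "\<forall>\<^sub>F e in at_right 0. t < G e"
      by (intro eventually_mono[OF eventually_at_right_real[OF \<open>0 < e0\<close>]])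
        (auto intro: less_le_trans[OF _ G_antimono])
  qed
  then have "peierls \<phi> x y = S"
    unfolding peierls_def G_def[symmetric] by (rule tendsto_Lim[OF trivial_limit_at_right_real])
  with assms show ?thesis
    unfolding S_def G_def[symmetric] by (auto intro: SUP_upper)
qed

lemma ereal_le_INF_add_INF:
  fixes f :: "'a \<Rightarrow> real" and g :: "'b \<Rightarrow> real"
  assumes "\<And>i j. i \<in> I \<Longrightarrow> j \<in> J \<Longrightarrow> c \<le> f i + g j"
  shows "ereal c \<le> (INF i\<in>I. ereal (f i)) + (INF j\<in>J. ereal (g j))"
proof (cases "I = {} \<or> J = {}")
  case True
  then show ?thesis by (auto simp: top_ereal_def)
next
  case False
  then obtain i0 j0 where "i0 \<in> I" "j0 \<in> J" by auto
  have "ereal (c - g j0) \<le> (INF i\<in>I. ereal (f i))"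
    using assms \<open>j0 \<in> J\<close> by (intro INF_greatest) (simp add: algebra_simps)
  moreover have "(INF i\<in>I. ereal (f i)) \<le> ereal (f i0)"
    using \<open>i0 \<in> I\<close> by (rule INF_lower)
  ultimately obtain p where p: "(INF i\<in>I. ereal (f i)) = ereal p"
    by (cases "INF i\<in>I. ereal (f i)") auto
  have "ereal (c - p) \<le> (INF j\<in>J. ereal (g j))"
  proof (rule INF_greatest)
    fix j assume "j \<in> J"
    then have "ereal (c - g j) \<le> ereal p"
      unfolding p[symmetric] using assms by (intro INF_greatest) (simp add: algebra_simps)
    then show "ereal (c - p) \<le> ereal (g j)" by simp
  qed
  then show ?thesis
    unfolding p by (cases "INF j\<in>J. ereal (g j)") auto
qed

lemma peierls_add_ge:
  assumes "0 < e"
    and "\<And>n z m w. z \<in> Bset x y n e \<Longrightarrow> w \<in> Bset y x m e \<Longrightarrow>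
      \<delta> \<le> (\<Sum>i<n. \<phi> ((shift ^^ i) z) - alpha \<phi>) + (\<Sum>i<m. \<phi> ((shift ^^ i) w) - alpha \<phi>)"
  shows "ereal \<delta> \<le> peierls \<phi> x y + peierls \<phi> y x"
proof -
  define S where "S n z = (\<Sum>i<n. \<phi> ((shift ^^ i) z) - alpha \<phi>)" for n z
  define A where "A x y = (INF p\<in>Sigma UNIV (\<lambda>n. Bset x y n e). ereal (case_prod S p))" for x y
  have "A x y \<le> peierls \<phi> x y" for x y
  proof -
    have "A x y \<le> ereal (S n z)" if "z \<in> Bset x y n e" for n z
      unfolding A_def using that by (intro INF_lower2[of "(n, z)"]) auto
    then have "A x y \<le> liminf (\<lambda>n. INF z\<in>Bset x y n e. ereal (S n z))"
      by (intro Liminf_bounded always_eventually allI INF_greatest)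
    also have "\<dots> \<le> peierls \<phi> x y"
      unfolding S_def by (rule peierls_ge_liminf[OF assms(1)])
    finally show ?thesis .
  qed
  moreover have "ereal \<delta> \<le> A x y + A y x"
    unfolding A_def using assms(2) by (intro ereal_le_INF_add_INF) (auto simp: S_def)
  ultimately show ?thesis
    by (metis add_mono order_trans)
qed

section \<open>Round trips between minimizing fixed points\<close>

lemma round_trip_birkhoff_sums_ge:
  fixes h :: "real \<Rightarrow> real \<Rightarrow> real" and d E :: real
  defines "\<phi> \<equiv> \<lambda>x. h (x 0) (x 1)"
  assumes loop_gap: "\<And>xs x y. set xs \<subseteq> {0..1} \<Longrightarrow> x \<in> set xs \<Longrightarrow> x < c \<Longrightarrow>
      y \<in> set xs \<Longrightarrow> c \<le> y \<Longrightarrow> length xs * d + E \<le> cycle_sum h xs"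
    and lip: "\<And>p q q'. p \<in> {0..1} \<Longrightarrow> q \<in> {0..1} \<Longrightarrow> q' \<in> {0..1} \<Longrightarrow>
      \<bar>h p q - h p q'\<bar> \<le> L * \<bar>q - q'\<bar>"
    and "0 \<le> L" "alpha \<phi> \<le> d" "a \<in> {0..1}" "b \<in> {0..1}"
    and e: "2 * e \<le> c - a" "2 * e \<le> b - c" "8 * L * e \<le> E / 2"
    and z: "z \<in> Bset (\<lambda>_. a) (\<lambda>_. b) n e" and w: "w \<in> Bset (\<lambda>_. b) (\<lambda>_. a) m e"
  shows "E / 2 \<le> (\<Sum>i<n. \<phi> ((shift ^^ i) z) - alpha \<phi>) + (\<Sum>i<m. \<phi> ((shift ^^ i) w) - alpha \<phi>)"
proof -
  note zf = Bset_const_endpoints[OF z assms(6,7)] and wf = Bset_const_endpoints[OF w assms(7,6)]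
  have z01: "\<And>i. z i \<in> {0..1}" and w01: "\<And>i. w i \<in> {0..1}"
    using zf(1) wf(1) by (auto simp: Xsp_def)
  have "0 < n" using zf(2,3) e(1,2) by (cases n) auto
  have "0 < m" using wf(2,3) e(1,2) by (cases m) auto
  define xs where "xs = map z [0..<n] @ map w [0..<m]"
  have "length xs * d + E \<le> cycle_sum h xs"
  proof (rule loop_gap)
    show "set xs \<subseteq> {0..1}" using z01 w01 by (auto simp: xs_def)
    show "z 0 \<in> set xs" "w 0 \<in> set xs" using \<open>0 < n\<close> \<open>0 < m\<close> by (auto simp: xs_def)
    show "z 0 < c" "c \<le> w 0" using zf(2) wf(2) e(1,2) by auto
  qed
  also have "\<dots> \<le> (\<Sum>i<n. h (z i) (z (Suc i))) + (\<Sum>i<m. h (w i) (w (Suc i)))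
      + L * \<bar>w 0 - z n\<bar> + L * \<bar>z 0 - w m\<bar>"
    unfolding xs_def by (rule cycle_sum_two_segments_le[OF \<open>0 < n\<close> \<open>0 < m\<close> z01 w01 lip])
  also have "\<dots> \<le> (\<Sum>i<n. h (z i) (z (Suc i))) + (\<Sum>i<m. h (w i) (w (Suc i))) + E / 2"
  proof -
    have "\<bar>w 0 - z n\<bar> \<le> 4 * e" "\<bar>z 0 - w m\<bar> \<le> 4 * e"
      using zf(2,3) wf(2,3) by auto
    then have "L * \<bar>w 0 - z n\<bar> + L * \<bar>z 0 - w m\<bar> \<le> L * (4 * e) + L * (4 * e)"
      using \<open>0 \<le> L\<close> by (intro add_mono mult_left_mono)
    with e(3) show ?thesis by simp
  qed
  finally have "(n + m) * d + E / 2 \<le> (\<Sum>i<n. h (z i) (z (Suc i))) + (\<Sum>i<m. h (w i) (w (Suc i)))"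
    by (simp add: xs_def)
  moreover have "(n + m) * alpha \<phi> \<le> (n + m) * d"
    using \<open>alpha \<phi> \<le> d\<close> by (intro mult_left_mono) auto
  ultimately show ?thesis
    by (simp add: \<phi>_def funpow_shift sum_subtractf algebra_simps)
qed

lemma classH_round_trip_lower_bound:
  fixes h :: "real \<Rightarrow> real \<Rightarrow> real"
  defines "\<phi> \<equiv> \<lambda>x. h (x 0) (x 1)"
  assumes hH: "h \<in> classH" and a: "a \<in> mset_h h" and b: "b \<in> {0..1}"
    and c: "a < c" "c < b" "c \<notin> mset_h h"
  obtains e \<delta> where "0 < e" "0 < \<delta>"
    "\<And>n z m w. z \<in> Bset (\<lambda>_. a) (\<lambda>_. b) n e \<Longrightarrow> w \<in> Bset (\<lambda>_. b) (\<lambda>_. a) m e \<Longrightarrow>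
      \<delta> \<le> (\<Sum>i<n. \<phi> ((shift ^^ i) z) - alpha \<phi>) + (\<Sum>i<m. \<phi> ((shift ^^ i) w) - alpha \<phi>)"
proof -
  have "a \<in> {0..1}" using a by (simp add: mset_h_def)
  obtain E where "0 < E" and loop_gap: "\<And>xs x y. set xs \<subseteq> {0..1} \<Longrightarrow> x \<in> set xs \<Longrightarrow> x < c \<Longrightarrow>
      y \<in> set xs \<Longrightarrow> c \<le> y \<Longrightarrow> length xs * hstar h + E \<le> cycle_sum h xs"
    using classH_cycle_sum_gap[OF hH _ c(3)] \<open>a \<in> {0..1}\<close> b c(1,2) by auto
  obtain L where "0 \<le> L" and lip: "\<And>p q q'. p \<in> {0..1} \<Longrightarrow> q \<in> {0..1} \<Longrightarrow> q' \<in> {0..1} \<Longrightarrow>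
      \<bar>h p q - h p q'\<bar> \<le> L * \<bar>q - q'\<bar>"
    using classH_lipschitz_snd[OF hH] by blast
  define e where "e = min (min ((c - a) / 2) ((b - c) / 2)) (E / (16 * (L + 1)))"
  have "0 < e"
    using c \<open>0 < E\<close> \<open>0 \<le> L\<close> by (simp add: e_def)
  have "e \<le> min ((c - a) / 2) ((b - c) / 2)" "e \<le> E / (16 * (L + 1))"
    unfolding e_def by (rule min.cobounded1, rule min.cobounded2)
  then have "2 * e \<le> c - a" "2 * e \<le> b - c" "e * (16 * (L + 1)) \<le> E"
    using \<open>0 \<le> L\<close> by (auto simp: le_divide_eq)
  then have e: "2 * e \<le> c - a" "2 * e \<le> b - c" "8 * L * e \<le> E / 2"
    using \<open>0 < e\<close> by (simp_all add: algebra_simps)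
  have "alpha \<phi> \<le> hstar h"
    unfolding \<phi>_def by (rule alpha_le_hstar[OF hH a])
  with round_trip_birkhoff_sums_ge[OF loop_gap lip \<open>0 \<le> L\<close> _ \<open>a \<in> {0..1}\<close> b e] \<open>0 < e\<close> \<open>0 < E\<close>
  show ?thesis
    using that[of e "E / 2"] unfolding \<phi>_def by auto
qed

lemma not_connected_component_gap:
  fixes S :: "real set"
  assumes "a \<in> S" "b \<in> S" "a < b" "\<not> connected_component S a b"
  obtains c where "a < c" "c < b" "c \<notin> S"
proof -
  have "\<not> {a..b} \<subseteq> S"
  proof
    assume "{a..b} \<subseteq> S"
    then have "connected_component S a b"
      using \<open>a < b\<close> by (intro connected_componentI[OF connected_Icc]) auto
    with assms(4) show False ..
  qed
  then obtain c where "c \<in> {a..b}" "c \<notin> S" by blast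
  with assms that show thesis
    by (metis atLeastAtMost_iff order_le_less)
qed

lemma peierls_add_pos:
  assumes hH: "h \<in> classH" and a: "a \<in> mset_h h" and b: "b \<in> mset_h h"
    and "\<not> connected_component (mset_h h) a b" "a < b"
  shows "0 < peierls (\<lambda>x. h (x 0) (x 1)) (\<lambda>_. a) (\<lambda>_. b)
       + peierls (\<lambda>x. h (x 0) (x 1)) (\<lambda>_. b) (\<lambda>_. a)"
proof -
  obtain c where c: "a < c" "c < b" "c \<notin> mset_h h"
    using not_connected_component_gap[OF a b assms(5,4)] .
  have "b \<in> {0..1}" using b by (simp add: mset_h_def)
  obtain e \<delta> where "0 < e" "0 < \<delta>" and loop:
    "\<And>n z m w. z \<in> Bset (\<lambda>_. a) (\<lambda>_. b) n e \<Longrightarrow> w \<in> Bset (\<lambda>_. b) (\<lambda>_. a) m e \<Longrightarrow>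
      \<delta> \<le> (\<Sum>i<n. h ((shift ^^ i) z 0) ((shift ^^ i) z 1) - alpha (\<lambda>x. h (x 0) (x 1)))
         + (\<Sum>i<m. h ((shift ^^ i) w 0) ((shift ^^ i) w 1) - alpha (\<lambda>x. h (x 0) (x 1)))"
    using classH_round_trip_lower_bound[OF hH a \<open>b \<in> {0..1}\<close> c] by blast
  have "0 < ereal \<delta>"
    using \<open>0 < \<delta>\<close> by simp
  also have "ereal \<delta> \<le> peierls (\<lambda>x. h (x 0) (x 1)) (\<lambda>_. a) (\<lambda>_. b)
       + peierls (\<lambda>x. h (x 0) (x 1)) (\<lambda>_. b) (\<lambda>_. a)"
    using loop by (intro peierls_add_ge[OF \<open>0 < e\<close>]) simp
  finally show ?thesis .
qed

theorem theorem4p1: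
  fixes h :: "real \<Rightarrow> real \<Rightarrow> real" and a b :: real
  assumes "h \<in> classH"
    and "a \<in> mset_h h" and "b \<in> mset_h h"
    and "\<not> connected_component (mset_h h) a b"
  shows "peierls (\<lambda>x. h (x 0) (x 1)) (\<lambda>_. a) (\<lambda>_. b)
       + peierls (\<lambda>x. h (x 0) (x 1)) (\<lambda>_. b) (\<lambda>_. a) \<noteq> 0"
proof -
  have "a \<noteq> b"
    using assms(2,4) connected_component_refl by metis
  then consider "a < b" | "b < a" by linarith
  then show ?thesis
  proof cases
    case 1
    with peierls_add_pos[OF assms] show ?thesis by simp
  next
    case 2
    with peierls_add_pos[OF assms(1,3,2)] assms(4) show ?thesis
      by (simp add: add.commute connected_component_sym_eq)
  qed
qed

end
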